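(* For every lattice tree automaton $\mathcal{A}$, $\mathcal{L}(\mathcal{A})\subseteq\mathcal{L}(eval(\mathcal{A}))$.
   Context: Lattice tree automaton (LTA) $\mathcal{A}=\langle\mathcal{F},\mathcal{Q},\mathcal{Q}_f,\Delta\rangle$ over an atomic lattice $\Lambda$: alphabet $\mathcal{F}=\mathcal{F}_\circ\cup\mathcal{F}_\bullet^{\#}$ where $\mathcal{F}_\circ$ are passive symbols and $\mathcal{F}_\bullet^{\#}=\Lambda\cup OP^{\#}\cup\{\sqcup,\sqcap\}$ are interpreted symbols, with an evaluation function $eval$ mapping terms over interpreted symbols to $\Lambda$; finite states, final states $\mathcal{Q}_f$, normalized transitions $f(q_1,\dots,q_n)\to q$ including lambda transitions $\lambda\to q$, $\lambda\in\Lambda$. Runs and the language $\mathcal{L}(\mathcal{A})$ are as usual for LTA: a term $t$ (over passive symbols, operations and atoms of $\Lambda$) is accepted if some $t'\sqsupseteq t$ reduces to a final state, where subterms over interpreted symbols with evaluation $\sqsubseteq\lambda$ may be reduced to $q$ when $\lambda\to q\in\Delta$. $propag$: for a transition set $\Delta$, whenever $f(q_1,\dots,q_k)\to q\in\Delta$ with $f$ an interpreted operation of arity $k$ and $\lambda_1\to^*_\Delta q_1,\dots,\lambda_k\to^*_\Delta q_k$ with $\lambda_i\in\Lambda$: if there is already $\lambda\to q\in\Delta$ with $eval(f(\lambda_1,\dots,\lambda_k))\sqsubseteq\lambda$, nothing is added; otherwise $propag(\Delta)=\Delta\cup\{eval(f(\lambda_1,\dots,\lambda_k))\to q\}$. Then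 $eval(\Delta)=\mu X.\,propag(X)\cup\Delta$ (least fixpoint obtained by iterating $propag$) and $eval(\mathcal{A})=\langle\mathcal{F},\mathcal{Q},\mathcal{Q}_f,eval(\Delta)\rangle$. *)

theory Defs
  imports Main
begin

definition is_atom :: "'l::{lattice,order_bot} \<Rightarrow> bool" where
  "is_atom a \<longleftrightarrow> a \<noteq> bot \<and> (\<forall>b. b \<le> a \<longrightarrow> b = bot \<or> b = a)"

definition atomic_lattice :: "'l::{lattice,order_bot} itself \<Rightarrow> bool" where
  "atomic_lattice _ \<longleftrightarrow> (\<forall>x::'l. x \<noteq> bot \<longrightarrow> (\<exists>a. is_atom a \<and> a \<le> x))"

text \<open>Symbols heading an application node: passive symbols ('f), interpreted
  operations of OP# ('o), and the lattice join / meet. Lattice elements are leaves.\<close>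
datatype ('f,'o) sym = Pas 'f | Opr 'o | Join | Meet

datatype ('f,'o,'l) trm = App "('f,'o) sym" "('f,'o,'l) trm list" | Lat 'l

datatype ('f,'o,'l,'q) rule = Rule "('f,'o) sym" "'q list" 'q | LamRule 'l 'q

record ('f,'o,'l,'q) lta =
  states :: "'q set"
  final  :: "'q set"
  delta  :: "('f,'o,'l,'q) rule set"

fun sym_arity :: "('f \<Rightarrow> nat) \<Rightarrow> ('o \<Rightarrow> nat) \<Rightarrow> ('f,'o) sym \<Rightarrow> nat" where
  "sym_arity arp aro (Pas f) = arp f"
| "sym_arity arp aro (Opr g) = aro g"
| "sym_arity arp aro Join = 2"
| "sym_arity arp aro Meet = 2"

fun interp_sym :: "('f,'o) sym \<Rightarrow> bool" where
  "interp_sym (Pas f) = False"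
| "interp_sym _ = True"

fun wf_trm :: "('f \<Rightarrow> nat) \<Rightarrow> ('o \<Rightarrow> nat) \<Rightarrow> ('f,'o,'l) trm \<Rightarrow> bool" where
  "wf_trm arp aro (Lat a) = True"
| "wf_trm arp aro (App f ts) = (length ts = sym_arity arp aro f \<and> (\<forall>t\<in>set ts. wf_trm arp aro t))"

fun interp_trm :: "('f,'o,'l) trm \<Rightarrow> bool" where
  "interp_trm (Lat a) = True"
| "interp_trm (App f ts) = (interp_sym f \<and> (\<forall>t\<in>set ts. interp_trm t))"

fun atom_trm :: "('f,'o,'l::{lattice,order_bot}) trm \<Rightarrow> bool" where
  "atom_trm (Lat a) = is_atom a"
| "atom_trm (App f ts) = (f \<noteq> Join \<and> f \<noteq> Meet \<and> (\<forall>t\<in>set ts. atom_trm t))"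

fun eval_sym :: "('o \<Rightarrow> 'l list \<Rightarrow> 'l) \<Rightarrow> ('f,'o) sym \<Rightarrow> 'l::lattice list \<Rightarrow> 'l" where
  "eval_sym I (Opr g) ls = I g ls"
| "eval_sym I Join ls = sup (ls ! 0) (ls ! 1)"
| "eval_sym I Meet ls = inf (ls ! 0) (ls ! 1)"
| "eval_sym I (Pas f) ls = undefined"

fun eval_trm :: "('o \<Rightarrow> 'l list \<Rightarrow> 'l) \<Rightarrow> ('f,'o,'l::lattice) trm \<Rightarrow> 'l" where
  "eval_trm I (Lat a) = a"
| "eval_trm I (App f ts) = eval_sym I f (map (eval_trm I) ts)"

inductive le_trm :: "('f,'o,'l::lattice) trm \<Rightarrow> ('f,'o,'l) trm \<Rightarrow> bool" where
  "a \<le> b \<Longrightarrow> le_trm (Lat a) (Lat b)"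
| "list_all2 le_trm ts us \<Longrightarrow> le_trm (App f ts) (App f us)"

inductive reach :: "('f,'o,'l::lattice,'q) rule set \<Rightarrow> ('o \<Rightarrow> 'l list \<Rightarrow> 'l)
    \<Rightarrow> ('f,'o,'l) trm \<Rightarrow> 'q \<Rightarrow> bool" for D I where
  reach_rule: "Rule f qs q \<in> D \<Longrightarrow> list_all2 (reach D I) ts qs \<Longrightarrow> reach D I (App f ts) q"
| reach_lam: "LamRule lam q \<in> D \<Longrightarrow> interp_trm t \<Longrightarrow> eval_trm I t \<le> lam \<Longrightarrow> reach D I t q"

definition wf_lta :: "('f \<Rightarrow> nat) \<Rightarrow> ('o \<Rightarrow> nat) \<Rightarrow> ('f,'o,'l,'q) lta \<Rightarrow> bool" where
  "wf_lta arp aro A \<longleftrightarrow> finite (states A) \<and> final A \<subseteq> states A \<and> finite (delta A) \<and>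
     (\<forall>f qs q. Rule f qs q \<in> delta A \<longrightarrow>
        length qs = sym_arity arp aro f \<and> set qs \<subseteq> states A \<and> q \<in> states A) \<and>
     (\<forall>lam q. LamRule lam q \<in> delta A \<longrightarrow> q \<in> states A)"

definition lang :: "('f \<Rightarrow> nat) \<Rightarrow> ('o \<Rightarrow> nat) \<Rightarrow> ('o \<Rightarrow> 'l list \<Rightarrow> 'l)
    \<Rightarrow> ('f,'o,'l::{lattice,order_bot},'q) lta \<Rightarrow> ('f,'o,'l) trm set" where
  "lang arp aro I A = {t. wf_trm arp aro t \<and> atom_trm t \<and>
      (\<exists>t'. le_trm t t' \<and> (\<exists>q\<in>final A. reach (delta A) I t' q))}"

definition propag :: "('o \<Rightarrow> 'l list \<Rightarrow> 'l) \<Rightarrow> ('f,'o,'l::lattice,'q) rule set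
    \<Rightarrow> ('f,'o,'l,'q) rule set" where
  "propag I D = D \<union>
     {LamRule (eval_trm I (App f (map Lat ls))) q | f qs q ls.
        Rule f qs q \<in> D \<and> interp_sym f \<and> length ls = length qs \<and>
        list_all2 (\<lambda>l q'. reach D I (Lat l) q') ls qs \<and>
        \<not> (\<exists>lam. LamRule lam q \<in> D \<and> eval_trm I (App f (map Lat ls)) \<le> lam)}"

definition eval_delta :: "('o \<Rightarrow> 'l list \<Rightarrow> 'l) \<Rightarrow> ('f,'o,'l::lattice,'q) rule set
    \<Rightarrow> ('f,'o,'l,'q) rule set" where
  "eval_delta I D = (\<Union>n. ((\<lambda>X. propag I X \<union> D) ^^ n) D)"

definition eval_lta :: "('o \<Rightarrow> 'l list \<Rightarrow> 'l) \<Rightarrow> ('f,'o,'l::lattice,'q) lta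
    \<Rightarrow> ('f,'o,'l,'q) lta" where
  "eval_lta I A = A\<lparr>delta := eval_delta I (delta A)\<rparr>"

end

theory Submission
  imports Defs
begin

text \<open>The evaluated automaton only has more transitions than the original one, and runs
  are monotone in the set of transitions; so every run of the original automaton is a
  run of the evaluated one.\<close>

lemma reach_mono:
  assumes "reach D I t q" and "D \<subseteq> E"
  shows "reach E I t q"
  using assms(1)
proof (induction rule: reach.induct)
  case (reach_rule f qs q ts)
  then show ?case
    using assms(2) by (auto intro!: reach.reach_rule elim!: list_all2_mono)
next
  case (reach_lam lam q t)
  then show ?case
    using assms(2) by (auto intro: reach.reach_lam)
qed

lemma subset_eval_delta: "D \<subseteq> eval_delta I D"
  unfolding eval_delta_def by (metis UNIV_I UN_upper funpow_0)

lemma lang_mono: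
  assumes "delta A \<subseteq> delta B" and "final A = final B"
  shows "lang arp aro I A \<subseteq> lang arp aro I B"
proof
  fix t
  assume "t \<in> lang arp aro I A"
  then obtain t' q where "wf_trm arp aro t" "atom_trm t" "le_trm t t'"
    and "q \<in> final A" "reach (delta A) I t' q"
    unfolding lang_def by blast
  moreover have "reach (delta B) I t' q"
    using \<open>reach (delta A) I t' q\<close> assms(1) by (rule reach_mono)
  ultimately show "t \<in> lang arp aro I B"
    unfolding lang_def using assms(2) by blast
qed

theorem mainTheorem5:
  fixes arp :: "'f \<Rightarrow> nat" and aro :: "'o \<Rightarrow> nat"
    and I :: "'o \<Rightarrow> 'l::{lattice,order_bot} list \<Rightarrow> 'l"
    and A :: "('f,'o,'l,'q) lta"
  assumes "atomic_lattice TYPE('l)"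
    and "wf_lta arp aro A"
  shows "lang arp aro I A \<subseteq> lang arp aro I (eval_lta I A)"
  by (rule lang_mono) (simp_all add: eval_lta_def subset_eval_delta)

end
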